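(* For every $n\geq 1$, \[ \mathcal{P}_n=\left\{1^k0^{n-p-k}1^p \;\middle|\; 0\leq p\leq n-1,\ 0\leq k\leq n-p-1\right\}\cup\left\{1^n\right\}. \]
   Context: For an integer $m\geq 0$, $\mathcal{L}_m$ is the line $y=mx-m^2$, $H_m(x,y)=y-mx+m^2$, $\mathcal{H}_m^+=\{H_m>0\}$ (the side containing $(-1,1)$) and $\mathcal{H}_m^-=\{H_m<0\}$. For $n\geq 0$, the regions of the arrangement of $\mathcal{L}_0,\dots,\mathcal{L}_{n-1}$ are the connected components of $\mathbb{R}^2\setminus(\mathcal{L}_0\cup\dots\cup\mathcal{L}_{n-1})$. Each region lies, for each $i$, entirely in $\mathcal{H}_i^+$ or entirely in $\mathcal{H}_i^-$; its code is the binary word $\sigma_0\sigma_1\cdots\sigma_{n-1}$ with $\sigma_i=1$ if the region lies in $\mathcal{H}_i^+$ and $\sigma_i=0$ if it lies in $\mathcal{H}_i^-$. $\mathcal{P}_n$ is the set of codes of the regions of this arrangement. Words are concatenated; $\sigma^k$ denotes $k$ consecutive copies of the letter $\sigma$, with $\sigma^k$ the empty word for $k\leq 0$. *)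

theory Defs
  imports "HOL-Analysis.Analysis"
begin

definition H :: "nat \<Rightarrow> real \<times> real \<Rightarrow> real" where
  "H m p = snd p - real m * fst p + (real m)^2"

definition Lline :: "nat \<Rightarrow> (real \<times> real) set" where
  "Lline m = {p. H m p = 0}"

definition Hplus :: "nat \<Rightarrow> (real \<times> real) set" where
  "Hplus m = {p. H m p > 0}"

definition Hminus :: "nat \<Rightarrow> (real \<times> real) set" where
  "Hminus m = {p. H m p < 0}"

definition complement :: "nat \<Rightarrow> (real \<times> real) set" where
  "complement n = UNIV - (\<Union>i<n. Lline i)"

definition regions :: "nat \<Rightarrow> (real \<times> real) set set" where
  "regions n = {connected_component_set (complement n) x | x. x \<in> complement n}"

definition code :: "nat \<Rightarrow> (real \<times> real) set \<Rightarrow> nat list" where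
  "code n R = map (\<lambda>i. if R \<subseteq> Hplus i then 1 else 0) [0..<n]"

definition P :: "nat \<Rightarrow> nat list set" where
  "P n = code n ` regions n"

end

theory Submission
  imports Defs
begin

text \<open>A region is determined by the signs of the H_i at any of its points, and as a
  function of i, H_i(x,y) = i^2 - x i + y is a monic quadratic. Its negative set on
  {0,...,n-1} is therefore a block of consecutive indices (possibly empty), giving the
  words 1^k 0^(b-k) 1^(n-b) with k < b, and 1^n. Conversely the point whose quadratic has
  roots k - 1/2 and b - 1/2 realizes the block from k to b - 1.\<close>

definition sign_word :: "nat \<Rightarrow> real \<times> real \<Rightarrow> nat list" where
  "sign_word n x = map (\<lambda>i. if H i x > 0 then 1 else 0) [0..<n]"

definition block_word :: "nat \<Rightarrow> nat \<Rightarrow> nat \<Rightarrow> nat list" where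
  "block_word n k b = map (\<lambda>i. if k \<le> i \<and> i < b then 0 else 1) [0..<n]"

lemma complement_iff: "x \<in> complement n \<longleftrightarrow> (\<forall>i<n. H i x \<noteq> 0)"
  by (auto simp: complement_def Lline_def)

lemma H_as_quadratic: "H i (a, c) = (real i)\<^sup>2 - a * real i + c"
  by (simp add: H_def)

lemma continuous_on_H: "continuous_on S (H i)"
  unfolding H_def by (intro continuous_intros)

lemma connected_component_subset_positive_iff:
  fixes f :: "'a::topological_space \<Rightarrow> real"
  assumes f: "continuous_on S f" and nonzero: "\<And>y. y \<in> S \<Longrightarrow> f y \<noteq> 0" and x: "x \<in> S"
  shows "connected_component_set S x \<subseteq> {y. f y > 0} \<longleftrightarrow> f x > 0"
proof
  show "connected_component_set S x \<subseteq> {y. f y > 0} \<Longrightarrow> f x > 0"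
    using x connected_component_refl by fastforce
next
  let ?C = "connected_component_set S x"
  assume pos: "f x > 0"
  have "connected (f ` ?C)"
    using connected_continuous_image continuous_on_subset[OF f connected_component_subset]
    by blast
  hence interval: "is_interval (f ` ?C)"
    by (simp add: is_interval_connected_1)
  show "?C \<subseteq> {y. f y > 0}"
  proof
    fix y assume y: "y \<in> ?C"
    have "x \<in> ?C"
      using x by simp
    show "y \<in> {y. f y > 0}"
    proof (rule ccontr)
      assume "y \<notin> {y. f y > 0}"
      hence "f y \<le> 0" by simp
      hence "0 \<in> f ` ?C"
        using interval \<open>x \<in> ?C\<close> y pos unfolding is_interval_1 by (meson imageI less_imp_le)
      thus False
        using nonzero connected_component_subset by fastforce
    qed
  qed
qed

lemma code_connected_component:
  assumes "x \<in> complement n"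
  shows "code n (connected_component_set (complement n) x) = sign_word n x"
proof -
  have "connected_component_set (complement n) x \<subseteq> Hplus i \<longleftrightarrow> H i x > 0" if "i < n" for i
    using connected_component_subset_positive_iff[OF continuous_on_H _ assms, of i] that
    by (simp add: Hplus_def complement_iff)
  thus ?thesis
    unfolding code_def sign_word_def by (intro map_cong) auto
qed

lemma P_eq_sign_words: "P n = sign_word n ` complement n"
proof -
  have "regions n = connected_component_set (complement n) ` complement n"
    by (auto simp: regions_def)
  hence "P n = (\<lambda>x. code n (connected_component_set (complement n) x)) ` complement n"
    by (simp add: P_def image_image)
  thus ?thesis
    by (simp add: code_connected_component cong: image_cong)
qed

lemma block_word_eq_replicate:
  assumes "k \<le> b" "b \<le> n"
  shows "block_word n k b = replicate k 1 @ replicate (b - k) 0 @ replicate (n - b) 1"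
  using assms by (intro nth_equalityI) (auto simp: block_word_def nth_append)

lemma quadratic_neg_between:
  fixes a c lo i hi :: real
  assumes "lo \<le> i" "i \<le> hi" "lo\<^sup>2 - a * lo + c < 0" "hi\<^sup>2 - a * hi + c < 0"
  shows "i\<^sup>2 - a * i + c < 0"
proof (cases "lo = hi")
  case True
  thus ?thesis using assms by auto
next
  case False
  hence lt: "lo < hi" using assms by auto
  \<comment> \<open>the quadratic minus its chord through lo and hi is (i - lo) (i - hi)\<close>
  have "(i\<^sup>2 - a * i + c) * (hi - lo)
      = (hi - i) * (lo\<^sup>2 - a * lo + c) + (i - lo) * (hi\<^sup>2 - a * hi + c)
        + (hi - lo) * ((i - lo) * (i - hi))"
    by (simp add: algebra_simps power2_eq_square)
  also have "\<dots> < 0"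
  proof -
    have "(hi - i) * (lo\<^sup>2 - a * lo + c) + (i - lo) * (hi\<^sup>2 - a * hi + c) < 0"
    proof (cases "i = lo")
      case True
      thus ?thesis using assms lt by (simp add: mult_pos_neg)
    next
      case False
      hence "(i - lo) * (hi\<^sup>2 - a * hi + c) < 0"
        using assms by (simp add: mult_pos_neg)
      moreover have "(hi - i) * (lo\<^sup>2 - a * lo + c) \<le> 0"
        using assms by (simp add: mult_nonneg_nonpos)
      ultimately show ?thesis by linarith
    qed
    moreover have "(hi - lo) * ((i - lo) * (i - hi)) \<le> 0"
      using assms lt by (simp add: mult_nonneg_nonpos)
    ultimately show ?thesis by linarith
  qed
  finally show ?thesis
    using lt by (simp add: mult_less_0_iff)
qed

lemma sign_word_cases:
  assumes x: "x \<in> complement n"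
  shows "sign_word n x = replicate n 1 \<or> (\<exists>k b. k < b \<and> b \<le> n \<and> sign_word n x = block_word n k b)"
proof (cases "\<forall>i<n. H i x > 0")
  case True
  hence "sign_word n x = map (\<lambda>i. 1) [0..<n]"
    unfolding sign_word_def by (intro map_cong) auto
  thus ?thesis by (simp add: map_replicate_const)
next
  case False
  define Z where "Z = {i. i < n \<and> H i x < 0}"
  have "Z \<noteq> {}" "finite Z"
    using False x by (auto simp: Z_def complement_iff not_less order.order_iff_strict)
  define lo where "lo = Min Z"
  define hi where "hi = Max Z"
  have lo: "lo \<in> Z" and hi: "hi \<in> Z"
    using \<open>Z \<noteq> {}\<close> \<open>finite Z\<close> by (auto simp: lo_def hi_def)
  have neg_iff: "H i x < 0 \<longleftrightarrow> lo \<le> i \<and> i < hi + 1" if "i < n" for i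
  proof
    assume "H i x < 0"
    thus "lo \<le> i \<and> i < hi + 1"
      using that \<open>finite Z\<close> by (auto simp: lo_def hi_def Z_def less_Suc_eq_le)
  next
    assume "lo \<le> i \<and> i < hi + 1"
    thus "H i x < 0"
      using quadratic_neg_between[of "real lo" "real i" "real hi" "fst x" "snd x"] lo hi
      by (cases x) (auto simp: Z_def H_as_quadratic)
  qed
  have pos_iff: "H i x > 0 \<longleftrightarrow> \<not> (lo \<le> i \<and> i < hi + 1)" if "i < n" for i
  proof -
    have "H i x \<noteq> 0"
      using x that by (simp add: complement_iff)
    thus ?thesis
      using neg_iff[OF that] by linarith
  qed
  have "sign_word n x = block_word n lo (hi + 1)"
    unfolding sign_word_def block_word_def using pos_iff by (intro map_cong) auto
  moreover have "lo < hi + 1"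
    using Min_le[OF \<open>finite Z\<close> hi] by (simp add: lo_def)
  moreover have "hi + 1 \<le> n"
    using hi by (simp add: Z_def)
  ultimately show ?thesis by blast
qed

lemma all_ones_sign_word: "sign_word n (0, 1) = replicate n 1" "(0, 1) \<in> complement n"
proof -
  have pos: "H i (0, 1) > 0" for i
    by (simp add: H_def add_pos_nonneg)
  hence "sign_word n (0, 1) = map (\<lambda>i. 1) [0..<n]"
    unfolding sign_word_def by (intro map_cong) auto
  thus "sign_word n (0, 1) = replicate n 1"
    by (simp add: map_replicate_const)
  show "(0, 1) \<in> complement n"
    using pos by (metis complement_iff less_irrefl)
qed

lemma half_below_of_nat_iff: "real k - 1/2 < real i \<longleftrightarrow> k \<le> i"
proof
  assume "real k - 1/2 < real i"
  hence "real k < real (Suc i)" by simp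
  thus "k \<le> i" by simp
qed simp

lemma block_word_realized:
  assumes "k < b"
  shows "\<exists>x \<in> complement n. sign_word n x = block_word n k b"
proof -
  define r1 where "r1 = real k - 1/2"
  define r2 where "r2 = real b - 1/2"
  define x where "x = (r1 + r2, r1 * r2)"
  have Hx: "H i x = (real i - r1) * (real i - r2)" for i
    by (simp add: H_def x_def algebra_simps power2_eq_square)
  have sign: "H i x \<noteq> 0 \<and> (H i x > 0 \<longleftrightarrow> \<not> (k \<le> i \<and> i < b))" for i
  proof -
    have "real i - r1 \<noteq> 0" "real i - r1 > 0 \<longleftrightarrow> k \<le> i"
      using half_below_of_nat_iff[of k i] half_below_of_nat_iff[of "Suc i" k]
      by (auto simp: r1_def)
    moreover have "real i - r2 \<noteq> 0" "real i - r2 > 0 \<longleftrightarrow> b \<le> i"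
      using half_below_of_nat_iff[of b i] half_below_of_nat_iff[of "Suc i" b]
      by (auto simp: r2_def)
    ultimately show ?thesis
      using assms unfolding Hx by (auto simp: zero_less_mult_iff)
  qed
  have "sign_word n x = block_word n k b"
    unfolding sign_word_def block_word_def using sign by (intro map_cong) auto
  moreover have "x \<in> complement n"
    using sign by (simp add: complement_iff)
  ultimately show ?thesis by blast
qed

lemma sign_words_complement:
  "sign_word n ` complement n
     = {block_word n k b | k b. k < b \<and> b \<le> n} \<union> {replicate n 1}" (is "_ = ?B \<union> _")
proof
  show "sign_word n ` complement n \<subseteq> ?B \<union> {replicate n 1}"
    using sign_word_cases by blast
  have "w \<in> sign_word n ` complement n" if "w \<in> ?B" for w
  proof -
    obtain k b where "k < b" "w = block_word n k b"
      using \<open>w \<in> ?B\<close> by blast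
    then obtain x where "x \<in> complement n" "sign_word n x = w"
      using block_word_realized by blast
    thus ?thesis by blast
  qed
  moreover have "replicate n 1 \<in> sign_word n ` complement n"
    using all_ones_sign_word by (metis image_eqI)
  ultimately show "?B \<union> {replicate n 1} \<subseteq> sign_word n ` complement n"
    by blast
qed

lemma block_words_as_replicates:
  assumes "n \<ge> 1"
  shows "{block_word n k b | k b. k < b \<and> b \<le> n}
       = {replicate k 1 @ replicate (n - p - k) 0 @ replicate p 1 | p k.
            p \<le> n - 1 \<and> k \<le> n - p - 1}" (is "?B = ?R")
proof
  show "?B \<subseteq> ?R"
  proof
    fix w assume "w \<in> ?B"
    then obtain k b where kb: "k < b" "b \<le> n" and w: "w = block_word n k b"
      by blast
    have "w = replicate k 1 @ replicate (n - (n - b) - k) 0 @ replicate (n - b) 1"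
      using kb by (simp add: w block_word_eq_replicate)
    moreover have "n - b \<le> n - 1" "k \<le> n - (n - b) - 1"
      using kb by auto
    ultimately show "w \<in> ?R" by blast
  qed
  show "?R \<subseteq> ?B"
  proof
    fix w assume "w \<in> ?R"
    then obtain p k where pk: "p \<le> n - 1" "k \<le> n - p - 1"
      and w: "w = replicate k 1 @ replicate (n - p - k) 0 @ replicate p 1"
      by blast
    have "w = block_word n k (n - p)"
      using pk assms by (simp add: w block_word_eq_replicate diff_diff_add)
    moreover have "k < n - p" "n - p \<le> n"
      using pk assms by auto
    ultimately show "w \<in> ?B" by blast
  qed
qed

theorem corollary19:
  fixes n :: nat
  assumes "n \<ge> 1"
  shows "P n = {replicate k 1 @ replicate (n - p - k) 0 @ replicate p 1 | p k.
                  p \<le> n - 1 \<and> k \<le> n - p - 1} \<union> {replicate n 1}"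
  using assms by (simp add: P_eq_sign_words sign_words_complement block_words_as_replicates)

end
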